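(* Let $X\subseteq\mathbb{R}^D$ be a finite dataset, $\varepsilon>0$, and $\mathrm{minPts}$ a positive integer. Call $x\in X$ a DBSCAN core-point if $|B(x,\varepsilon)\cap X|\ge\mathrm{minPts}$, where $B(x,\varepsilon)=\{x':|x-x'|\le\varepsilon\}$. Let $S\subseteq X$ be any subset, and call $x\in S$ a DBSCAN++ core-point if $|B(x,\varepsilon)\cap X|\ge\mathrm{minPts}$. Let $N_0$ be the set of points of $X$ at distance greater than $\varepsilon$ from every DBSCAN core-point (the DBSCAN noise points), and $N_1$ the set of points of $X$ at distance greater than $\varepsilon$ from every DBSCAN++ core-point (the DBSCAN++ noise points), both computed with the same $\varepsilon$ and $\mathrm{minPts}$. Then $N_0\subseteq N_1$.
   Context: DBSCAN forms a graph connecting each core-point to all sample points within distance $\varepsilon$ and returns connected components as clusters; points not in this graph, i.e. farther than $\varepsilon$ from every core-point, are noise points (outliers). DBSCAN++ does the same but only considers core-points in a chosen subset $S$ of the data. *)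

theory Defs
  imports "HOL-Analysis.Analysis"
begin

definition dbscan_core :: "('a::metric_space) set \<Rightarrow> real \<Rightarrow> nat \<Rightarrow> 'a set" where
  "dbscan_core X eps minPts = {x \<in> X. card (cball x eps \<inter> X) \<ge> minPts}"

definition dbscanpp_core :: "('a::metric_space) set \<Rightarrow> 'a set \<Rightarrow> real \<Rightarrow> nat \<Rightarrow> 'a set" where
  "dbscanpp_core X S eps minPts = {x \<in> S. card (cball x eps \<inter> X) \<ge> minPts}"

definition noise_points :: "('a::metric_space) set \<Rightarrow> 'a set \<Rightarrow> real \<Rightarrow> 'a set" where
  "noise_points X C eps = {x \<in> X. \<forall>c\<in>C. dist x c > eps}"

end

theory Submission
  imports Defs
begin

lemma dbscanpp_core_subset_dbscan_core:
  assumes "S \<subseteq> X"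
  shows "dbscanpp_core X S eps minPts \<subseteq> dbscan_core X eps minPts"
  using assms unfolding dbscanpp_core_def dbscan_core_def by blast

lemma noise_points_antimono:
  assumes "C \<subseteq> C'"
  shows "noise_points X C' eps \<subseteq> noise_points X C eps"
  using assms unfolding noise_points_def by blast

theorem lemma1:
  fixes X S :: "(real ^ 'd) set" and eps :: real and minPts :: nat
  assumes "finite X" and "eps > 0" and "minPts > 0" and "S \<subseteq> X"
  shows "noise_points X (dbscan_core X eps minPts) eps
           \<subseteq> noise_points X (dbscanpp_core X S eps minPts) eps"
  using dbscanpp_core_subset_dbscan_core[OF assms(4)] by (rule noise_points_antimono)

end
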